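(* Let $\mathbf{u}$ be a Sturmian word with parameters $(\ell_0,\ell_1,\rho)$ which is fixed by a primitive morphism $\varphi_w$, $w\in\{a,b,\alpha,\beta\}^*$. (1) If $w \in \{b,\beta\}^*$, then $\rho = \ell_1$. (2) If $w \in \{b,\alpha\}^*$, then $\rho = 0$. (3) If $w \in \{a,\beta\}^*$, then $\rho = \ell_0+\ell_1$. (4) If $w \in \{a,\alpha\}^*$, then $\rho = \ell_0$.
   Context: Morphisms on $\{0,1\}^*$: $\varphi_a: 0\mapsto 0, 1 \mapsto 10$; $\varphi_b: 0 \mapsto 0, 1\mapsto 01$; $\varphi_\alpha: 0\mapsto 01, 1\mapsto 1$; $\varphi_\beta: 0\mapsto 10, 1 \mapsto 1$; for $w=w_0\cdots w_{m-1}$, $\varphi_w = \varphi_{w_0}\circ\cdots\circ\varphi_{w_{m-1}}$. A morphism is primitive if some power maps every letter to a word containing every letter. Two interval exchange words: given $\ell_0,\ell_1>0$, take either $I=[0,\ell_0+\ell_1)$, $I_0=[0,\ell_0)$, $I_1=[\ell_0,\ell_0+\ell_1)$ (lower case) or $I=(0,\ell_0+\ell_1]$, $I_0=(0,\ell_0]$, $I_1=(\ell_0,\ell_0+\ell_1]$ (upper case); $T(x)=x+\ell_1$ on $I_0$, $T(x)=x-\ell_0$ on $I_1$; for $\rho\in I$, $u_n = 0$ if $T^n(\rho)\in I_0$ and $u_n=1$ otherwise. With $\ell_1/(\ell_0+\ell_1)$ irrational these are the Sturmian words; "Sturmian word with parameters $(\ell_0,\ell_1,\rho)$" means such a lower or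 upper coding. *)

theory Defs
  imports Complex_Main
begin

text \<open>Letters are the naturals 0 and 1; finite words are nat lists; infinite words are
  functions nat \<Rightarrow> nat. A morphism is given by the images of the letters.\<close>

type_synonym morph = "nat \<Rightarrow> nat list"

definition morph_list :: "morph \<Rightarrow> nat list \<Rightarrow> nat list" where
  "morph_list \<phi> xs = concat (map \<phi> xs)"

datatype gen = Ga | Gb | Galpha | Gbeta

definition phi_gen :: "gen \<Rightarrow> morph" where
  "phi_gen g x = (case g of
      Ga \<Rightarrow> (if x = 0 then [0] else [1,0])
    | Gb \<Rightarrow> (if x = 0 then [0] else [0,1])
    | Galpha \<Rightarrow> (if x = 0 then [0,1] else [1])
    | Gbeta \<Rightarrow> (if x = 0 then [1,0] else [1]))"

fun phi_word :: "gen list \<Rightarrow> morph" where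
  "phi_word [] = (\<lambda>x. [x])"
| "phi_word (g # ws) = (\<lambda>x. morph_list (phi_gen g) (phi_word ws x))"

definition primitive :: "morph \<Rightarrow> bool" where
  "primitive \<phi> \<longleftrightarrow> (\<exists>k\<ge>1. \<forall>x\<in>{0::nat,1}. \<forall>y\<in>{0::nat,1}.
      y \<in> set ((morph_list \<phi> ^^ k) [x]))"

definition fixed_by :: "morph \<Rightarrow> (nat \<Rightarrow> nat) \<Rightarrow> bool" where
  "fixed_by \<phi> u \<longleftrightarrow> (\<forall>n i. i < length (morph_list \<phi> (map u [0..<n])) \<longrightarrow>
      morph_list \<phi> (map u [0..<n]) ! i = u i)"

definition T_lower :: "real \<Rightarrow> real \<Rightarrow> real \<Rightarrow> real" where
  "T_lower l0 l1 x = (if x < l0 then x + l1 else x - l0)"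

definition T_upper :: "real \<Rightarrow> real \<Rightarrow> real \<Rightarrow> real" where
  "T_upper l0 l1 x = (if x \<le> l0 then x + l1 else x - l0)"

definition lower_coding :: "real \<Rightarrow> real \<Rightarrow> real \<Rightarrow> nat \<Rightarrow> nat" where
  "lower_coding l0 l1 \<rho> n = (if (T_lower l0 l1 ^^ n) \<rho> < l0 then 0 else 1)"

definition upper_coding :: "real \<Rightarrow> real \<Rightarrow> real \<Rightarrow> nat \<Rightarrow> nat" where
  "upper_coding l0 l1 \<rho> n = (if (T_upper l0 l1 ^^ n) \<rho> \<le> l0 then 0 else 1)"

definition sturmian :: "(nat \<Rightarrow> nat) \<Rightarrow> real \<Rightarrow> real \<Rightarrow> real \<Rightarrow> bool" where
  "sturmian u l0 l1 \<rho> \<longleftrightarrow> l0 > 0 \<and> l1 > 0 \<and> l1 / (l0 + l1) \<notin> \<rat> \<and>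
     ((0 \<le> \<rho> \<and> \<rho> < l0 + l1 \<and> u = lower_coding l0 l1 \<rho>) \<or>
      (0 < \<rho> \<and> \<rho> \<le> l0 + l1 \<and> u = upper_coding l0 l1 \<rho>))"

end

theory Submission
  imports Defs "HOL-Analysis.Kronecker_Approximation_Theorem"
begin

(* Each generator morphism phi_g sends the coding of (l0, l1, r) to the coding of the explicit
   triple gen_params g (l0, l1, r): the old exchange is the first-return map of the new one to a
   translate of its domain, and phi_g i is the itinerary of a point of I_i until its return.
   Hence phi_w u codes (a, b, s) = foldr gen_params w (l0, l1, rho).  If u is fixed by phi_w,
   the two codings agree, and since l1 / (l0 + l1) is irrational (Kronecker) a coding
   determines its parameters up to scaling: (a, b, s) = c (l0, l1, rho), where c > 1 because
   primitivity forces w to be nonempty.  Finally the generators of each two-letter alphabet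
   preserve an offset s - E a b, with E a b = b, 0, a + b, a respectively; so
   rho - E l0 l1 = c (rho - E l0 l1), i.e. rho = E l0 l1. *)

text \<open>The flag \<open>up\<close> selects the upper coding (intervals closed on the right) instead of the lower one.\<close>

definition in_I0 :: "bool \<Rightarrow> real \<Rightarrow> real \<Rightarrow> bool" where
  "in_I0 up l0 x \<longleftrightarrow> (if up then x \<le> l0 else x < l0)"

definition iet :: "bool \<Rightarrow> real \<Rightarrow> real \<Rightarrow> real \<Rightarrow> real" where
  "iet up l0 l1 x = (if in_I0 up l0 x then x + l1 else x - l0)"

definition letter :: "bool \<Rightarrow> real \<Rightarrow> real \<Rightarrow> nat" where
  "letter up l0 x = (if in_I0 up l0 x then 0 else 1)"

definition coding :: "bool \<Rightarrow> real \<Rightarrow> real \<Rightarrow> real \<Rightarrow> nat \<Rightarrow> nat" where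
  "coding up l0 l1 r n = letter up l0 ((iet up l0 l1 ^^ n) r)"

definition in_I :: "bool \<Rightarrow> real \<Rightarrow> real \<Rightarrow> bool" where
  "in_I up L x \<longleftrightarrow> (if up then 0 < x \<and> x \<le> L else 0 \<le> x \<and> x < L)"

definition admissible :: "bool \<Rightarrow> real \<Rightarrow> real \<Rightarrow> real \<Rightarrow> bool" where
  "admissible up l0 l1 r \<longleftrightarrow> 0 < l0 \<and> 0 < l1 \<and> in_I up (l0 + l1) r"

lemma sturmianE:
  assumes "sturmian u l0 l1 \<rho>"
  obtains up where "admissible up l0 l1 \<rho>" "u = coding up l0 l1 \<rho>"
proof -
  have "iet False = T_lower" "iet True = T_upper"
    by (intro ext; simp add: iet_def in_I0_def T_lower_def T_upper_def)+
  then have "coding False = lower_coding" "coding True = upper_coding"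
    by (intro ext; simp add: coding_def letter_def in_I0_def lower_coding_def upper_coding_def)+
  then show thesis
    using assms that[of False] that[of True]
    unfolding sturmian_def admissible_def in_I_def by auto
qed

lemma admissible_iet: "admissible up l0 l1 x \<Longrightarrow> admissible up l0 l1 (iet up l0 l1 x)"
  by (auto simp: admissible_def in_I_def iet_def in_I0_def)

lemma admissible_iet_funpow:
  "admissible up l0 l1 x \<Longrightarrow> admissible up l0 l1 ((iet up l0 l1 ^^ n) x)"
  by (induction n) (auto intro: admissible_iet)

lemma iet_funpow_eq:
  "(iet up l0 l1 ^^ n) r = r + real n * l1 - (l0 + l1) * real (\<Sum>i<n. coding up l0 l1 r i)"
proof (induction n)
  case 0
  then show ?case by simp
next
  case (Suc n)
  have "(iet up l0 l1 ^^ Suc n) r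
      = (iet up l0 l1 ^^ n) r + l1 - (l0 + l1) * real (coding up l0 l1 r n)"
    by (simp add: iet_def coding_def letter_def)
  then show ?case by (simp add: Suc.IH algebra_simps)
qed

definition morph_image :: "morph \<Rightarrow> (nat \<Rightarrow> nat) \<Rightarrow> (nat \<Rightarrow> nat) \<Rightarrow> bool" where
  "morph_image \<sigma> u v \<longleftrightarrow> (\<forall>n. \<exists>m\<ge>n. morph_list \<sigma> (map u [0..<n]) = map v [0..<m])"

lemma morph_list_append [simp]: "morph_list \<sigma> (xs @ ys) = morph_list \<sigma> xs @ morph_list \<sigma> ys"
  by (simp add: morph_list_def)

lemma morph_list_Cons [simp]: "morph_list \<sigma> (x # xs) = \<sigma> x @ morph_list \<sigma> xs"
  by (simp add: morph_list_def)

lemma morph_list_Nil [simp]: "morph_list \<sigma> [] = []"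
  by (simp add: morph_list_def)

lemma morph_list_singleton: "morph_list (\<lambda>x. [x]) xs = xs"
  by (induction xs) auto

lemma morph_list_comp:
  "morph_list (\<lambda>x. morph_list \<tau> (\<sigma> x)) xs = morph_list \<tau> (morph_list \<sigma> xs)"
  by (induction xs) auto

lemma fixed_by_morph_image_eq:
  assumes "fixed_by \<sigma> u" "morph_image \<sigma> u v"
  shows "u = v"
proof
  fix i
  obtain m where m: "m \<ge> Suc i" "morph_list \<sigma> (map u [0..<Suc i]) = map v [0..<m]"
    using assms(2) unfolding morph_image_def by blast
  then have "morph_list \<sigma> (map u [0..<Suc i]) ! i = u i"
    using assms(1) unfolding fixed_by_def by (metis Suc_le_lessD length_map length_upt minus_nat.diff_0)
  with m show "u i = v i" by simp
qed

lemma morph_image_comp: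
  assumes "morph_image \<sigma> u v" "morph_image \<tau> v w"
  shows "morph_image (\<lambda>x. morph_list \<tau> (\<sigma> x)) u w"
  unfolding morph_image_def morph_list_comp
proof
  fix n
  obtain m where "m \<ge> n" "morph_list \<sigma> (map u [0..<n]) = map v [0..<m]"
    using assms(1) unfolding morph_image_def by blast
  moreover obtain k where "k \<ge> m" "morph_list \<tau> (map v [0..<m]) = map w [0..<k]"
    using assms(2) unfolding morph_image_def by blast
  ultimately show "\<exists>k\<ge>n. morph_list \<tau> (morph_list \<sigma> (map u [0..<n])) = map w [0..<k]"
    using order_trans by auto
qed

lemma map_upt_add: "map f [0..<k + m] = map f [0..<k] @ map (\<lambda>i. f (k + i)) [0..<m]"
  by (induction m) auto

lemma morph_image_orbit_codings:
  fixes T :: "'a \<Rightarrow> 'a" and T' :: "'b \<Rightarrow> 'b"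
  assumes invariant: "\<And>y. y \<in> S \<Longrightarrow> T y \<in> S"
    and nonerasing: "\<And>y. y \<in> S \<Longrightarrow> \<sigma> (c y) \<noteq> []"
    and itinerary: "\<And>y. y \<in> S \<Longrightarrow>
      \<sigma> (c y) = map (\<lambda>i. c' ((T' ^^ i) (h y))) [0..<length (\<sigma> (c y))] \<and>
      (T' ^^ length (\<sigma> (c y))) (h y) = h (T y)"
    and "x \<in> S"
  shows "morph_image \<sigma> (\<lambda>i. c ((T ^^ i) x)) (\<lambda>i. c' ((T' ^^ i) (h x)))"
  unfolding morph_image_def
proof
  fix n
  show "\<exists>m\<ge>n. morph_list \<sigma> (map (\<lambda>i. c ((T ^^ i) x)) [0..<n])
      = map (\<lambda>i. c' ((T' ^^ i) (h x))) [0..<m]"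
    using \<open>x \<in> S\<close>
  proof (induction n arbitrary: x)
    case 0
    then show ?case by simp
  next
    case (Suc n)
    define k where "k = length (\<sigma> (c x))"
    obtain m where m: "m \<ge> n" "morph_list \<sigma> (map (\<lambda>i. c ((T ^^ i) (T x))) [0..<n])
        = map (\<lambda>i. c' ((T' ^^ i) (h (T x)))) [0..<m]"
      using Suc invariant by blast
    have "k \<ge> 1" using nonerasing[OF Suc.prems] by (simp add: k_def Suc_le_eq)
    have "(T' ^^ (k + i)) (h x) = (T' ^^ i) (h (T x))" for i
      using itinerary[OF Suc.prems] by (subst add.commute) (simp add: k_def funpow_add)
    then have "map (\<lambda>i. c' ((T' ^^ i) (h x))) [0..<k + m]
        = \<sigma> (c x) @ morph_list \<sigma> (map (\<lambda>i. c ((T ^^ i) (T x))) [0..<n])"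
      using itinerary[OF Suc.prems] m(2) by (simp add: map_upt_add k_def)
    also have "\<dots> = morph_list \<sigma> (map (\<lambda>i. c ((T ^^ i) x)) [0..<Suc n])"
      by (simp only: map_upt_Suc funpow_0 funpow_Suc_right comp_apply id_apply morph_list_Cons)
    finally show ?case using m(1) \<open>k \<ge> 1\<close> by (intro exI[of _ "k + m"]) auto
  qed
qed

fun gen_params :: "gen \<Rightarrow> real \<times> real \<times> real \<Rightarrow> real \<times> real \<times> real" where
  "gen_params Ga (l0, l1, r) = (l0 + l1, l1, r + l1)"
| "gen_params Gb (l0, l1, r) = (l0 + l1, l1, r)"
| "gen_params Galpha (l0, l1, r) = (l0, l0 + l1, r)"
| "gen_params Gbeta (l0, l1, r) = (l0, l0 + l1, r + l0)"

lemma gen_params_translate: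
  "gen_params g (l0, l1, 0) = (a, b, \<delta>) \<Longrightarrow> gen_params g (l0, l1, r) = (a, b, r + \<delta>)"
  by (cases g) auto

lemma phi_gen_nonempty: "phi_gen g x \<noteq> []"
  by (cases g) (auto simp: phi_gen_def)

lemma phi_gen_itinerary:
  assumes "admissible up l0 l1 y" "gen_params g (l0, l1, 0) = (a, b, \<delta>)"
  defines "k \<equiv> length (phi_gen g (letter up l0 y))"
  shows "phi_gen g (letter up l0 y) = map (\<lambda>i. letter up a ((iet up a b ^^ i) (y + \<delta>))) [0..<k]
    \<and> (iet up a b ^^ k) (y + \<delta>) = iet up l0 l1 y + \<delta>"
  using assms unfolding k_def
  by (cases g; cases up)
    (auto simp: phi_gen_def letter_def iet_def in_I0_def admissible_def in_I_def numeral_2_eq_2)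

lemma admissible_gen_params:
  "admissible up l0 l1 r \<Longrightarrow> gen_params g (l0, l1, r) = (a, b, s) \<Longrightarrow> admissible up a b s"
  by (cases g; cases up) (auto simp: admissible_def in_I_def)

lemma morph_image_phi_gen:
  assumes "admissible up l0 l1 r" "gen_params g (l0, l1, r) = (a, b, s)"
  shows "morph_image (phi_gen g) (coding up l0 l1 r) (coding up a b s)"
proof -
  obtain \<delta> where \<delta>: "gen_params g (l0, l1, 0) = (a, b, \<delta>)" "s = r + \<delta>"
    using assms(2) gen_params_translate by (cases "gen_params g (l0, l1, 0)") fastforce
  have "morph_image (phi_gen g) (\<lambda>i. letter up l0 ((iet up l0 l1 ^^ i) r))
      (\<lambda>i. letter up a ((iet up a b ^^ i) (r + \<delta>)))"
    using assms(1) phi_gen_itinerary[OF _ \<delta>(1)]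
    by (intro morph_image_orbit_codings[where S = "Collect (admissible up l0 l1)"])
      (auto simp: admissible_iet phi_gen_nonempty)
  then show ?thesis by (simp add: coding_def[abs_def] \<delta>(2))
qed

lemma morph_image_phi_word:
  assumes "admissible up l0 l1 r" "foldr gen_params w (l0, l1, r) = (a, b, s)"
  shows "admissible up a b s \<and> morph_image (phi_word w) (coding up l0 l1 r) (coding up a b s)"
  using assms(2)
proof (induction w arbitrary: a b s)
  case Nil
  then show ?case
    using assms(1) by (auto simp: morph_image_def morph_list_singleton)
next
  case (Cons g w)
  obtain a' b' s' where params: "foldr gen_params w (l0, l1, r) = (a', b', s')"
    by (metis prod_cases3)
  with Cons have "gen_params g (a', b', s') = (a, b, s)" by simp
  with Cons.IH[OF params] show ?case
    by (auto intro: admissible_gen_params morph_image_comp morph_image_phi_gen)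
qed

lemma normalized_orbit_in_unit_interval:
  assumes "admissible up l0 l1 r"
  shows "r / (l0 + l1) + real n * (l1 / (l0 + l1)) - real (\<Sum>i<n. coding up l0 l1 r i) \<in> {0..1}"
proof -
  have L: "0 < l0 + l1" and I: "in_I up (l0 + l1) ((iet up l0 l1 ^^ n) r)"
    using admissible_iet_funpow[OF assms, of n] by (auto simp: admissible_def)
  have "r / (l0 + l1) + real n * (l1 / (l0 + l1)) - real (\<Sum>i<n. coding up l0 l1 r i)
      = (iet up l0 l1 ^^ n) r / (l0 + l1)"
    using L by (simp add: iet_funpow_eq add_divide_distrib diff_divide_distrib)
  also have "\<dots> \<in> {0..1}"
    using I L by (auto simp: in_I_def split: if_splits)
  finally show ?thesis .
qed

lemma arith_progression_bounded_imp_const: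
  fixes c d B :: real
  assumes "\<And>n::nat. \<bar>c + real n * d\<bar> \<le> B"
  shows "d = 0"
proof (rule ccontr)
  assume "d \<noteq> 0"
  obtain n :: nat where "(B + \<bar>c\<bar>) / \<bar>d\<bar> < real n"
    using reals_Archimedean2 by blast
  with \<open>d \<noteq> 0\<close> have "B + \<bar>c\<bar> < \<bar>real n * d\<bar>"
    by (simp add: field_simps abs_mult)
  with assms[of n] show False by linarith
qed

lemma irrational_rotation_approaches_one:
  fixes \<theta> x d :: real
  assumes "\<theta> \<notin> \<rat>" "0 < d"
  obtains n :: nat and k :: int where "1 - d < x + real n * \<theta> - k" "x + real n * \<theta> - k < 1"
proof -
  obtain h k :: int where k: "k > 0" and approx: "\<bar>of_int k * \<theta> - of_int h - (1 - d / 2 - x)\<bar> < d / 2"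
    using sequence_of_fractional_parts_is_dense[OF assms(1) half_gt_zero[OF assms(2)]] by blast
  from approx have "1 - d < x + real (nat k) * \<theta> - h" "x + real (nat k) * \<theta> - h < 1"
    using k unfolding abs_diff_less_iff by auto
  then show thesis by (rule that)
qed

lemma rotation_orbits_determine_parameters:
  fixes \<theta> \<theta>' x x' :: real and N :: "nat \<Rightarrow> int"
  assumes "\<theta> \<notin> \<rat>"
    and orbit: "\<And>n. x + real n * \<theta> - N n \<in> {0..1}"
    and orbit': "\<And>n. x' + real n * \<theta>' - N n \<in> {0..1}"
  shows "\<theta>' = \<theta> \<and> x' = x"
proof -
  have "\<bar>(x' - x) + real n * (\<theta>' - \<theta>)\<bar> \<le> 1" for n
    using orbit[of n] orbit'[of n] by (auto simp: algebra_simps)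
  then have \<theta>: "\<theta>' = \<theta>"
    using arith_progression_bounded_imp_const by force
  have no_gap: "\<not> y < y'"
    if y: "\<And>n. y + real n * \<theta> - N n \<in> {0..1}" and y': "\<And>n. y' + real n * \<theta> - N n \<in> {0..1}"
    for y y'
  proof
    assume "y < y'"
    then obtain n k where nk: "1 - (y' - y) < y + real n * \<theta> - of_int k" "y + real n * \<theta> - of_int k < 1"
      using irrational_rotation_approaches_one[OF assms(1)] by (metis diff_gt_0_iff_gt)
    (* at n = 0 the orbits give y' - y \<le> 1, so both points below lie in [0, 1] and (0, 1) *)
    with y[of n] y[of 0] y'[of 0] have "\<bar>of_int (k - N n)\<bar> < (1::real)" by auto
    then have "k = N n" by linarith
    with nk y'[of n] show False by auto
  qed
  from orbit' have "x' + real n * \<theta> - N n \<in> {0..1}" for n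
    unfolding \<theta> .
  with \<theta> no_gap[OF orbit] no_gap[OF _ orbit] show ?thesis by force
qed

lemma coding_eq_imp_proportional:
  assumes adm: "admissible up a0 a1 r" and adm': "admissible up b0 b1 s"
    and irrational: "a1 / (a0 + a1) \<notin> \<rat>"
    and eq: "coding up a0 a1 r = coding up b0 b1 s"
  obtains c where "c > 0" "b0 = c * a0" "b1 = c * a1" "s = c * r"
proof -
  define N where "N n = int (\<Sum>i<n. coding up a0 a1 r i)" for n
  have "b1 / (b0 + b1) = a1 / (a0 + a1) \<and> s / (b0 + b1) = r / (a0 + a1)"
    using normalized_orbit_in_unit_interval[OF adm] normalized_orbit_in_unit_interval[OF adm']
    by (intro rotation_orbits_determine_parameters[OF irrational, where N = N])
      (simp_all add: N_def eq)
  moreover have "0 < a0 + a1" "0 < b0 + b1"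
    using adm adm' by (auto simp: admissible_def)
  ultimately show thesis
    by (intro that[of "(b0 + b1) / (a0 + a1)"]) (auto simp: field_simps)
qed

lemma gen_params_grows:
  assumes "0 < l0" "0 < l1" "gen_params g (l0, l1, r) = (a, b, s)"
  shows "0 < a \<and> 0 < b \<and> l0 + l1 < a + b"
  using assms by (cases g) auto

lemma foldr_gen_params_grows:
  assumes "0 < l0" "0 < l1" "foldr gen_params w (l0, l1, r) = (a, b, s)"
  shows "0 < a \<and> 0 < b \<and> (w \<noteq> [] \<longrightarrow> l0 + l1 < a + b)"
  using assms(3)
proof (induction w arbitrary: a b s)
  case Nil
  then show ?case using assms(1,2) by simp
next
  case (Cons g w)
  obtain a' b' s' where params: "foldr gen_params w (l0, l1, r) = (a', b', s')"
    by (metis prod_cases3)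
  with Cons.IH have IH: "0 < a'" "0 < b'" "w \<noteq> [] \<longrightarrow> l0 + l1 < a' + b'" by auto
  moreover have "w = [] \<longrightarrow> a' = l0 \<and> b' = l1" using params by auto
  moreover from Cons.prems params have "gen_params g (a', b', s') = (a, b, s)" by simp
  then have "0 < a \<and> 0 < b \<and> a' + b' < a + b" using IH(1,2) gen_params_grows by blast
  ultimately show ?case by auto
qed

lemma foldr_gen_params_offsets:
  assumes "foldr gen_params w (l0, l1, r) = (a, b, s)"
  shows "(set w \<subseteq> {Gb, Gbeta} \<longrightarrow> s - b = r - l1)
       \<and> (set w \<subseteq> {Gb, Galpha} \<longrightarrow> s = r)
       \<and> (set w \<subseteq> {Ga, Gbeta} \<longrightarrow> s - (a + b) = r - (l0 + l1))
       \<and> (set w \<subseteq> {Ga, Galpha} \<longrightarrow> s - a = r - l0)"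
  using assms
proof (induction w arbitrary: a b s)
  case Nil
  then show ?case by simp
next
  case (Cons g w)
  obtain a' b' s' where params: "foldr gen_params w (l0, l1, r) = (a', b', s')"
    by (metis prod_cases3)
  with Cons.prems have "gen_params g (a', b', s') = (a, b, s)" by simp
  with Cons.IH[OF params] show ?case by (cases g) auto
qed

lemma not_primitive_phi_word_Nil: "\<not> primitive (phi_word [])"
proof -
  have "(morph_list (phi_word []) ^^ k) xs = xs" for k xs
    by (induction k) (simp_all add: morph_list_singleton)
  then show ?thesis by (auto simp: primitive_def)
qed

theorem lemma21:
  fixes u :: "nat \<Rightarrow> nat" and l0 l1 \<rho> :: real and w :: "gen list"
  assumes "sturmian u l0 l1 \<rho>"
    and "primitive (phi_word w)"
    and "fixed_by (phi_word w) u"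
  shows "(set w \<subseteq> {Gb, Gbeta} \<longrightarrow> \<rho> = l1)
       \<and> (set w \<subseteq> {Gb, Galpha} \<longrightarrow> \<rho> = 0)
       \<and> (set w \<subseteq> {Ga, Gbeta} \<longrightarrow> \<rho> = l0 + l1)
       \<and> (set w \<subseteq> {Ga, Galpha} \<longrightarrow> \<rho> = l0)"
proof -
  obtain up where adm: "admissible up l0 l1 \<rho>" and u: "u = coding up l0 l1 \<rho>"
    using sturmianE[OF assms(1)] .
  obtain a b s where params: "foldr gen_params w (l0, l1, \<rho>) = (a, b, s)"
    by (metis prod_cases3)
  have adm': "admissible up a b s" and image: "morph_image (phi_word w) u (coding up a b s)"
    using morph_image_phi_word[OF adm params] unfolding u by auto
  have "coding up l0 l1 \<rho> = coding up a b s"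
    using fixed_by_morph_image_eq[OF assms(3) image] unfolding u .
  moreover have "l1 / (l0 + l1) \<notin> \<rat>" using assms(1) by (simp add: sturmian_def)
  ultimately obtain c where c: "a = c * l0" "b = c * l1" "s = c * \<rho>"
    using coding_eq_imp_proportional[OF adm adm'] by blast
  have "w \<noteq> []" using assms(2) not_primitive_phi_word_Nil by blast
  then have "l0 + l1 < a + b"
    using foldr_gen_params_grows[OF _ _ params] adm by (simp add: admissible_def)
  then have "c \<noteq> 1" using c by auto
  have fixed_offset: "x = y" if "c * x - c * y = x - y" for x y
  proof -
    from that have "(c - 1) * (x - y) = 0" by (simp add: algebra_simps)
    with \<open>c \<noteq> 1\<close> show "x = y" by simp
  qed
  show ?thesis
    using foldr_gen_params_offsets[OF params] fixed_offset[of \<rho> l1] fixed_offset[of \<rho> 0]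
      fixed_offset[of \<rho> "l0 + l1"] fixed_offset[of \<rho> l0]
    unfolding c by (simp add: distrib_left)
qed

end
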